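(* Let $G$ be a network with three sources $s_1,s_2,s_3$ and three terminals $t_1,t_2,t_3$ such that every pair $(s_i,t_j)$ is connected by a directed path. If $G$ contains a vertex $v$ with $(c_s(v),c_t(v))\in\{(3,3),(2,3),(3,2)\}$, then for every finite field $\mathbb{F}$ there exists a linear network code over $\mathbb{F}$ under which every terminal recovers $X_1+X_2+X_3$.
   Context: A network is a finite directed acyclic graph (parallel edges allowed), every edge of unit capacity carrying one symbol of a finite field $\mathbb{F}$. Sources have no incoming edges; source $s_i$ holds $X_i\in\mathbb{F}$ (independent, uniform). Terminals have no outgoing edges. In a linear network code each edge leaving a non-source vertex carries an $\mathbb{F}$-linear combination of the symbols on the edges entering its tail; an edge leaving a source carries a multiple of its symbol. For a vertex $v$, $c_s(v)$ is the number of sources $s_i$ with a directed path from $s_i$ to $v$ (a vertex reaches itself), and $c_t(v)$ is the number of terminals $t_j$ with a directed path from $v$ to $t_j$; the pair $(c_s(v),c_t(v))$ is the type of $v$. *)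

theory Defs
  imports Main
begin

text \<open>A network: finite vertex set V, finite edge set E (parallel edges allowed, since
edges are abstract identifiers), tail/head maps, acyclic.\<close>

definition arcs :: "'e set \<Rightarrow> ('e \<Rightarrow> 'v) \<Rightarrow> ('e \<Rightarrow> 'v) \<Rightarrow> ('v \<times> 'v) set" where
  "arcs E tail head = {(tail e, head e) | e. e \<in> E}"

definition network :: "'v set \<Rightarrow> 'e set \<Rightarrow> ('e \<Rightarrow> 'v) \<Rightarrow> ('e \<Rightarrow> 'v) \<Rightarrow> bool" where
  "network V E tail head \<longleftrightarrow> finite V \<and> finite E \<and> (\<forall>e\<in>E. tail e \<in> V \<and> head e \<in> V)
     \<and> acyclic (arcs E tail head)"

definition has_path :: "'e set \<Rightarrow> ('e \<Rightarrow> 'v) \<Rightarrow> ('e \<Rightarrow> 'v) \<Rightarrow> 'v \<Rightarrow> 'v \<Rightarrow> bool" where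
  "has_path E tail head u v \<longleftrightarrow> (u, v) \<in> (arcs E tail head)\<^sup>*"

text \<open>Sources s 0..s(n-1), terminals t 0..t(m-1).\<close>
definition c_s :: "'e set \<Rightarrow> ('e \<Rightarrow> 'v) \<Rightarrow> ('e \<Rightarrow> 'v) \<Rightarrow> nat \<Rightarrow> (nat \<Rightarrow> 'v) \<Rightarrow> 'v \<Rightarrow> nat" where
  "c_s E tail head n s v = card {i. i < n \<and> has_path E tail head (s i) v}"

definition c_t :: "'e set \<Rightarrow> ('e \<Rightarrow> 'v) \<Rightarrow> ('e \<Rightarrow> 'v) \<Rightarrow> nat \<Rightarrow> (nat \<Rightarrow> 'v) \<Rightarrow> 'v \<Rightarrow> nat" where
  "c_t E tail head m t v = card {j. j < m \<and> has_path E tail head v (t j)}"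

text \<open>Linear network code over the field 'a: local coefficients alpha (source edges) and
beta (edge-to-edge), together with the induced edge messages msg e X as functions of the
source symbols X (X i is the symbol of source s i). Since the network is acyclic, msg is
uniquely determined by the coefficients.\<close>
definition is_linear_code ::
  "'e set \<Rightarrow> ('e \<Rightarrow> 'v) \<Rightarrow> ('e \<Rightarrow> 'v) \<Rightarrow> nat \<Rightarrow> (nat \<Rightarrow> 'v) \<Rightarrow>
   ('e \<Rightarrow> 'a::field) \<Rightarrow> ('e \<Rightarrow> 'e \<Rightarrow> 'a) \<Rightarrow> ('e \<Rightarrow> (nat \<Rightarrow> 'a) \<Rightarrow> 'a) \<Rightarrow> bool" where
  "is_linear_code E tail head n s alpha beta msg \<longleftrightarrow>
     (\<forall>X. \<forall>e\<in>E.
        (\<forall>i<n. tail e = s i \<longrightarrow> msg e X = alpha e * X i) \<and>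
        ((\<forall>i<n. tail e \<noteq> s i) \<longrightarrow>
           msg e X = (\<Sum>e'\<in>{e'\<in>E. head e' = tail e}. beta e' e * msg e' X)))"

definition recovers_sum ::
  "'e set \<Rightarrow> ('e \<Rightarrow> 'v) \<Rightarrow> nat \<Rightarrow> ('e \<Rightarrow> (nat \<Rightarrow> 'a::field) \<Rightarrow> 'a) \<Rightarrow> 'v \<Rightarrow> bool" where
  "recovers_sum E head n msg w \<longleftrightarrow>
     (\<exists>delta. \<forall>X. (\<Sum>e\<in>{e\<in>E. head e = w}. delta e * msg e X) = (\<Sum>i<n. X i))"

end

theory Submission
  imports Defs
begin

text \<open>
  It suffices to find a subgraph T of the network in which every source reaches every
  terminal and which is merge-free: no vertex is entered by two different edges of T whose tails
  have a common ancestor in T. On such a subgraph the all-ones code works over every field: each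
  edge of T carries exactly the sum of the symbols of those sources that reach its tail in T, so
  every terminal receives the sum of all source symbols (\<open>all_ones_code\<close>).

  The subgraph is assembled from arborescences around the special vertex v.
  Type (3,3): an in-tree towards v on its ancestors and an out-tree from v on its descendants
  (\<open>hub_subgraph\<close>). Type (2,3): in addition the source a that does not reach v spreads into its
  own descendants; where descendants of v and of a meet, a vertex is entered from both sides only
  if no edge enters it from the common part, and then the two entering edges come from disjoint
  ancestor-closed regions (\<open>two_hub_subgraph\<close>). Type (3,2) is the mirror image of (2,3) under
  reversal of all edges, because a subgraph that is merge-free in the reversed network is
  merge-free in the original one (\<open>merge_free_of_reverse\<close>, via the fork lemma
  \<open>no_merge_in_fork_free_region\<close>).
\<close>

lemma choose_edges:
  fixes f :: "'e \<Rightarrow> 'v"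
  assumes ex: "\<forall>u\<in>S. \<exists>e\<in>E. f e = u \<and> P e"
  shows "\<exists>C\<subseteq>E. bij_betw f C S \<and> (\<forall>e\<in>C. P e)"
proof -
  define g where "g u = (SOME e. e \<in> E \<and> f e = u \<and> P e)" for u
  have g: "g u \<in> E \<and> f (g u) = u \<and> P (g u)" if "u \<in> S" for u
    unfolding g_def by (rule someI_ex) (use ex that in blast)
  have "bij_betw f (g ` S) S"
    unfolding bij_betw_def inj_on_def by (auto simp: g image_iff)
  then show ?thesis using g by (intro exI[of _ "g ` S"]) auto
qed

lemma bij_betw_preimage: "bij_betw f C S \<Longrightarrow> u \<in> S \<Longrightarrow> \<exists>e\<in>C. f e = u"
  unfolding bij_betw_def by (metis imageE)

locale dag =
  fixes E :: "'e set" and tail head :: "'e \<Rightarrow> 'v"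
  assumes finite_E: "finite E" and acyclic_E: "acyclic (arcs E tail head)"
begin

abbreviation reach :: "'e set \<Rightarrow> 'v \<Rightarrow> 'v \<Rightarrow> bool" where
  "reach T x y \<equiv> (x, y) \<in> (arcs T tail head)\<^sup>*"

lemma arcs_iff: "(p, q) \<in> arcs T tail head \<longleftrightarrow> (\<exists>e\<in>T. tail e = p \<and> head e = q)"
  unfolding arcs_def by blast

lemma reach_mono:
  assumes "T \<subseteq> T'" "reach T x y"
  shows "reach T' x y"
proof -
  have "arcs T tail head \<subseteq> arcs T' tail head" using assms(1) unfolding arcs_def by blast
  then show ?thesis using assms(2) rtrancl_mono by blast
qed

lemma reach_snoc: "e \<in> T \<Longrightarrow> reach T x (tail e) \<Longrightarrow> reach T x (head e)"
  by (erule rtrancl_into_rtrancl) (auto simp: arcs_iff)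

lemma reach_cons: "e \<in> T \<Longrightarrow> reach T (head e) y \<Longrightarrow> reach T (tail e) y"
  by (rule converse_rtrancl_into_rtrancl) (auto simp: arcs_iff)

lemma finite_arcs: "finite (arcs E tail head)"
proof -
  have "arcs E tail head = (\<lambda>e. (tail e, head e)) ` E" unfolding arcs_def by auto
  then show ?thesis using finite_E by simp
qed

lemma wf_arcs: "wf (arcs E tail head)"
  using finite_acyclic_wf[OF finite_arcs acyclic_E] .

lemma wf_arcs_converse: "wf ((arcs E tail head)\<inverse>)"
  using finite_acyclic_wf_converse[OF finite_arcs acyclic_E] .

lemma no_cycle:
  assumes "T \<subseteq> E" "e \<in> T" "reach T (head e) (tail e)"
  shows False
proof -
  have "(tail e, head e) \<in> arcs E tail head" using assms(1,2) arcs_iff by blast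
  moreover have "reach E (head e) (tail e)" using reach_mono[OF assms(1,3)] .
  ultimately have "(tail e, tail e) \<in> (arcs E tail head)\<^sup>+" by (rule rtrancl_into_trancl2)
  then show False using acyclic_E unfolding acyclic_def by blast
qed

lemma reach_antisym: "reach E a b \<Longrightarrow> reach E b a \<Longrightarrow> a = b"
  using acyclic_E unfolding acyclic_def by (meson rtranclD trancl_rtrancl_trancl)

lemma first_edge: "reach T u w \<Longrightarrow> u \<noteq> w \<Longrightarrow> \<exists>e\<in>T. tail e = u \<and> reach T (head e) w"
  by (erule converse_rtranclE) (auto simp: arcs_iff)

lemma last_edge: "reach T u w \<Longrightarrow> u \<noteq> w \<Longrightarrow> \<exists>e\<in>T. head e = w \<and> reach T u (tail e)"
  by (erule rtranclE) (auto simp: arcs_iff)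

lemma ancestor_closed:
  assumes "\<forall>e\<in>T. head e \<in> Z \<longrightarrow> tail e \<in> Z" and "reach T x y" and "y \<in> Z"
  shows "x \<in> Z"
  using assms(2,3) by (induction rule: converse_rtrancl_induct) (use assms(1) arcs_iff in auto)

lemma reach_roots_forward:
  assumes TE: "T \<subseteq> E" and out: "\<forall>u\<in>W - Rt. \<exists>e\<in>T. tail e = u \<and> head e \<in> W"
  shows "u \<in> W \<Longrightarrow> \<exists>r\<in>Rt. reach T u r"
proof (induction u rule: wf_induct[OF wf_arcs_converse])
  case (1 u)
  show ?case
  proof (cases "u \<in> Rt")
    case False
    then obtain e where e: "e \<in> T" "tail e = u" "head e \<in> W" using out "1.prems" by blast
    then have "(head e, u) \<in> (arcs E tail head)\<inverse>" using TE arcs_iff by blast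
    then obtain r where "r \<in> Rt" "reach T (head e) r" using "1.IH" e(3) by blast
    then show ?thesis using reach_cons e by blast
  qed blast
qed

lemma reach_roots_backward:
  assumes TE: "T \<subseteq> E" and inc: "\<forall>w\<in>W - Rt. \<exists>e\<in>T. head e = w \<and> tail e \<in> W"
  shows "w \<in> W \<Longrightarrow> \<exists>r\<in>Rt. reach T r w"
proof (induction w rule: wf_induct[OF wf_arcs])
  case (1 w)
  show ?case
  proof (cases "w \<in> Rt")
    case False
    then obtain e where e: "e \<in> T" "head e = w" "tail e \<in> W" using inc "1.prems" by blast
    then have "(tail e, w) \<in> arcs E tail head" using TE arcs_iff by blast
    then obtain r where "r \<in> Rt" "reach T r (tail e)" using "1.IH" e(3) by blast
    then show ?thesis using reach_snoc e by blast
  qed blast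
qed

text \<open>The key notion: two T-paths from a common start never enter a vertex through different
  edges. Equivalently, between any two vertices there is at most one T-path.\<close>
definition merge_free :: "'e set \<Rightarrow> bool" where
  "merge_free T \<longleftrightarrow> (\<forall>e\<in>T. \<forall>e'\<in>T. \<forall>x.
     head e = head e' \<and> reach T x (tail e) \<and> reach T x (tail e') \<longrightarrow> e = e')"

lemma path_start:
  assumes "e \<in> T" "reach T x (tail e)"
  shows "\<exists>f\<in>T. tail f = x \<and> (f = e \<or> reach T (head f) (tail e))"
  using assms first_edge by (cases "x = tail e") blast+

text \<open>Inside an ancestor-closed region L, two paths that merge must have split
  somewhere; so if the two branches of every split inside L never meet again in L, then no two
  paths merge at a vertex of L.\<close>
lemma no_merge_in_fork_free_region:
  assumes TE: "T \<subseteq> E"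
    and closed: "\<forall>e\<in>T. head e \<in> L \<longrightarrow> tail e \<in> L"
    and forks: "\<forall>f\<in>T. \<forall>f'\<in>T. f \<noteq> f' \<and> tail f = tail f' \<and> head f \<in> L \<and> head f' \<in> L \<longrightarrow>
                  \<not> (\<exists>z\<in>L. reach T (head f) z \<and> reach T (head f') z)"
    and e: "e \<in> T" "e' \<in> T" "head e = head e'" "head e \<in> L"
  shows "reach T x (tail e) \<Longrightarrow> reach T x (tail e') \<Longrightarrow> e = e'"
proof (induction x rule: wf_induct[OF wf_arcs_converse])
  case (1 x)
  obtain f where f: "f \<in> T" "tail f = x" "f = e \<or> reach T (head f) (tail e)"
    using path_start[OF e(1) "1.prems"(1)] by blast
  obtain f' where f': "f' \<in> T" "tail f' = x" "f' = e' \<or> reach T (head f') (tail e')"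
    using path_start[OF e(2) "1.prems"(2)] by blast
  have hf: "reach T (head f) (head e)" using f(3) reach_snoc[OF e(1)] by auto
  have hf': "reach T (head f') (head e)" using f'(3) reach_snoc[OF e(2)] e(3) by auto
  have L: "head f \<in> L" "head f' \<in> L" using ancestor_closed[OF closed] hf hf' e(4) by blast+
  have "f = f'"
  proof (rule ccontr)
    assume "f \<noteq> f'"
    then have "\<not> (\<exists>z\<in>L. reach T (head f) z \<and> reach T (head f') z)"
      using forks f(1,2) f'(1,2) L by simp
    then show False using hf hf' e(4) by blast
  qed
  show "e = e'"
  proof (cases "f = e \<or> f' = e'")
    case True
    have "\<not> reach T (head e) (tail e')" "\<not> reach T (head e') (tail e)"
      using no_cycle[OF TE e(2)] no_cycle[OF TE e(1)] e(3) by auto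
    then show ?thesis using True f(3) f'(3) \<open>f = f'\<close> by auto
  next
    case False
    have "(head f, x) \<in> (arcs E tail head)\<inverse>" using f TE arcs_iff by blast
    moreover have "reach T (head f) (tail e)" "reach T (head f) (tail e')"
      using False f(3) f'(3) \<open>f = f'\<close> by auto
    ultimately show ?thesis by (rule "1.IH"[rule_format])
  qed
qed

lemma no_merge_from_separated_regions:
  assumes "\<forall>e\<in>T. head e \<in> P \<longrightarrow> tail e \<in> P" "\<forall>e\<in>T. head e \<in> Q \<longrightarrow> tail e \<in> Q" "P \<inter> Q = {}"
    and "tail e \<in> P" "tail e' \<in> Q"
  shows "\<not> (reach T x (tail e) \<and> reach T x (tail e'))"
  using ancestor_closed[OF assms(1)] ancestor_closed[OF assms(2)] assms(3-5) by blast

lemma unique_entry_edge: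
  assumes TE: "T \<subseteq> E" and mf: "merge_free T" and xu: "x \<noteq> u"
  shows "card {e\<in>T. head e = u \<and> reach T x (tail e)} = (if reach T x u then 1 else 0)"
proof -
  let ?S = "{e\<in>T. head e = u \<and> reach T x (tail e)}"
  have fin: "finite ?S" using finite_subset[OF TE finite_E] by simp
  have le: "card ?S \<le> Suc 0"
    unfolding card_le_Suc0_iff_eq[OF fin] using mf unfolding merge_free_def by blast
  have ne: "?S \<noteq> {} \<longleftrightarrow> reach T x u"
  proof
    assume "?S \<noteq> {}"
    then show "reach T x u" using reach_snoc by blast
  next
    assume "reach T x u"
    then show "?S \<noteq> {}" using last_edge[OF _ xu] by blast
  qed
  have "card ?S = 0 \<longleftrightarrow> \<not> reach T x u" using card_0_eq[OF fin] ne by blast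
  then show ?thesis using le by auto
qed

text \<open>The symbol that the all-ones code puts on the edges leaving u: the sum of the symbols of
  the sources reaching u in T.\<close>
definition source_sum :: "'e set \<Rightarrow> nat \<Rightarrow> (nat \<Rightarrow> 'v) \<Rightarrow> (nat \<Rightarrow> 'a::field) \<Rightarrow> 'v \<Rightarrow> 'a" where
  "source_sum T n s X u = (\<Sum>i<n. if reach T (s i) u then X i else 0)"

lemma source_sum_conservation:
  assumes TE: "T \<subseteq> E" and mf: "merge_free T" and u: "\<forall>i<n. s i \<noteq> u"
  shows "(\<Sum>e\<in>{e\<in>T. head e = u}. source_sum T n s X (tail e)) = source_sum T n s X u"
proof -
  let ?In = "{e\<in>T. head e = u}"
  have fin: "finite ?In" using finite_subset[OF TE finite_E] by simp
  have "(\<Sum>e\<in>?In. source_sum T n s X (tail e))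
        = (\<Sum>i<n. \<Sum>e\<in>?In. if reach T (s i) (tail e) then X i else 0)"
    unfolding source_sum_def by (rule sum.swap)
  also have "\<dots> = (\<Sum>i<n. of_nat (card {e\<in>?In. reach T (s i) (tail e)}) * X i)"
    using fin by (simp add: sum.If_cases Int_def conj_assoc)
  also have "\<dots> = (\<Sum>i<n. if reach T (s i) u then X i else 0)"
  proof (rule sum.cong[OF refl])
    fix i assume "i \<in> {..<n}"
    then have "card {e\<in>?In. reach T (s i) (tail e)} = (if reach T (s i) u then 1 else 0)"
      using unique_entry_edge[OF TE mf, of "s i" u] u by (simp add: conj_assoc)
    then show "of_nat (card {e\<in>?In. reach T (s i) (tail e)}) * X i
               = (if reach T (s i) u then X i else 0)" by simp
  qed
  finally show ?thesis unfolding source_sum_def .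
qed

text \<open>Sources have no entering edges, so a source is reached only by itself.\<close>
lemma source_sum_at_source:
  assumes TE: "T \<subseteq> E" and no_in: "\<forall>i<n. \<forall>e\<in>E. head e \<noteq> s i"
    and inj: "inj_on s {..<n}" and k: "k < n"
  shows "source_sum T n s X (s k) = X k"
proof -
  have "reach T (s i) (s k) \<longleftrightarrow> i = k" if i: "i < n" for i
  proof
    assume "reach T (s i) (s k)"
    then have "s i = s k" using last_edge no_in k TE by blast
    then show "i = k" using inj i k unfolding inj_on_def by simp
  qed simp
  then have "source_sum T n s X (s k) = (\<Sum>i<n. if i = k then X i else 0)"
    unfolding source_sum_def by (intro sum.cong) auto
  then show ?thesis using k by simp
qed

lemma sum_over_subgraph_in_edges:
  assumes "T \<subseteq> E"
  shows "(\<Sum>e\<in>{e\<in>E. head e = u}. if e \<in> T then g e else 0) = (\<Sum>e\<in>{e\<in>T. head e = u}. g e)"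
proof -
  have "{e\<in>{e\<in>E. head e = u}. e \<in> T} = {e\<in>T. head e = u}" using assms by blast
  then show ?thesis using sum.inter_filter[of "{e\<in>E. head e = u}" g "\<lambda>e. e \<in> T"] finite_E by simp
qed

lemma all_ones_code:
  assumes TE: "T \<subseteq> E" and mf: "merge_free T"
    and no_in: "\<forall>i<n. \<forall>e\<in>E. head e \<noteq> s i" and inj: "inj_on s {..<n}"
    and t_not_s: "\<forall>j<m. \<forall>i<n. t j \<noteq> s i"
    and conn: "\<forall>i<n. \<forall>j<m. reach T (s i) (t j)"
  shows "\<exists>(alpha :: 'e \<Rightarrow> 'a::field) beta msg.
           is_linear_code E tail head n s alpha beta msg \<and> (\<forall>j<m. recovers_sum E head n msg (t j))"
proof -
  define alpha :: "'e \<Rightarrow> 'a" where "alpha e = (if e \<in> T then 1 else 0)" for e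
  define beta :: "'e \<Rightarrow> 'e \<Rightarrow> 'a" where "beta e' e = alpha e" for e' e
  define msg :: "'e \<Rightarrow> (nat \<Rightarrow> 'a) \<Rightarrow> 'a" where
    "msg e X = (if e \<in> T then source_sum T n s X (tail e) else 0)" for e X
  have inflow: "(\<Sum>e\<in>{e\<in>E. head e = u}. msg e X) = source_sum T n s X u"
    if "\<forall>i<n. s i \<noteq> u" for u X
    unfolding msg_def sum_over_subgraph_in_edges[OF TE]
    using source_sum_conservation[OF TE mf that] .
  have "is_linear_code E tail head n s alpha beta msg"
    unfolding is_linear_code_def
  proof (intro allI ballI conjI impI)
    fix X e i assume "i < n" "tail e = s i"
    then show "msg e X = alpha e * X i"
      unfolding msg_def alpha_def by (simp add: source_sum_at_source[OF TE no_in inj])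
  next
    fix X e assume "\<forall>i<n. tail e \<noteq> s i"
    then have "(\<Sum>e'\<in>{e'\<in>E. head e' = tail e}. beta e' e * msg e' X)
               = alpha e * source_sum T n s X (tail e)"
      unfolding beta_def sum_distrib_left[symmetric] using inflow by metis
    then show "msg e X = (\<Sum>e'\<in>{e'\<in>E. head e' = tail e}. beta e' e * msg e' X)"
      unfolding msg_def alpha_def by simp
  qed
  moreover have "recovers_sum E head n msg (t j)" if j: "j < m" for j
    unfolding recovers_sum_def
  proof (intro exI allI)
    fix X
    have "(\<Sum>e\<in>{e\<in>E. head e = t j}. 1 * msg e X) = source_sum T n s X (t j)"
      using inflow[of "t j"] t_not_s j by fastforce
    also have "\<dots> = (\<Sum>i<n. X i)" unfolding source_sum_def using conn j by simp
    finally show "(\<Sum>e\<in>{e\<in>E. head e = t j}. 1 * msg e X) = (\<Sum>i<n. X i)" .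
  qed
  ultimately show ?thesis by blast
qed

definition ancestors :: "'v \<Rightarrow> 'v set" where
  "ancestors x = {u. reach E u x}"

definition descendants :: "'v \<Rightarrow> 'v set" where
  "descendants x = {w. reach E x w}"

lemma ancestors_of_in_edge: "e \<in> E \<Longrightarrow> head e \<in> ancestors v \<Longrightarrow> tail e \<in> ancestors v"
  unfolding ancestors_def using reach_cons by blast

lemma descendants_of_out_edge: "e \<in> E \<Longrightarrow> tail e \<in> descendants v \<Longrightarrow> head e \<in> descendants v"
  unfolding descendants_def using reach_snoc by blast

lemma ancestors_inter_descendants: "ancestors v \<inter> descendants v = {v}"
  unfolding ancestors_def descendants_def using reach_antisym by auto

definition in_tree :: "'e set \<Rightarrow> 'v \<Rightarrow> bool" where
  "in_tree C r \<longleftrightarrow> C \<subseteq> E \<and> bij_betw tail C (ancestors r - {r}) \<and> (\<forall>e\<in>C. head e \<in> ancestors r)"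

definition out_tree :: "'e set \<Rightarrow> 'v \<Rightarrow> bool" where
  "out_tree C r \<longleftrightarrow> C \<subseteq> E \<and> bij_betw head C (descendants r - {r}) \<and> (\<forall>e\<in>C. tail e \<in> descendants r)"

lemma in_tree_exists: "\<exists>C. in_tree C r"
  using choose_edges[of "ancestors r - {r}" E tail "\<lambda>e. head e \<in> ancestors r"] first_edge
  unfolding in_tree_def ancestors_def by fastforce

lemma out_tree_exists: "\<exists>C. out_tree C r"
  using choose_edges[of "descendants r - {r}" E head "\<lambda>e. tail e \<in> descendants r"] last_edge
  unfolding out_tree_def descendants_def by fastforce

lemma in_tree_reaches_root:
  assumes "in_tree C r" "C \<subseteq> T" "T \<subseteq> E" "u \<in> ancestors r"
  shows "reach T u r"
proof -
  have "\<forall>u\<in>ancestors r - {r}. \<exists>e\<in>T. tail e = u \<and> head e \<in> ancestors r"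
    using assms(1,2) bij_betw_preimage[of tail C] unfolding in_tree_def by blast
  then have "\<exists>r'\<in>{r}. reach T u r'"
    using reach_roots_forward[OF assms(3), of "ancestors r" "{r}"] assms(4) by simp
  then show ?thesis by simp
qed

text \<open>Out-trees are used in a slightly more general form: each vertex of W other than r is
  entered by a chosen edge from W.\<close>
lemma out_tree_reaches_leaves:
  assumes "C \<subseteq> T" "T \<subseteq> E" "\<forall>w\<in>W - {r}. \<exists>e\<in>C. head e = w \<and> tail e \<in> W" "w \<in> W"
  shows "reach T r w"
proof -
  have "\<forall>w\<in>W - {r}. \<exists>e\<in>T. head e = w \<and> tail e \<in> W" using assms(1,3) by auto
  then have "\<exists>r'\<in>{r}. reach T r' w"
    using reach_roots_backward[OF assms(2), of W "{r}"] assms(4) by simp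
  then show ?thesis by simp
qed

lemma hub_reach:
  assumes "in_tree CU v" "out_tree CR v" "CU \<union> CR \<subseteq> T" "T \<subseteq> E"
    and "u \<in> ancestors v" "w \<in> descendants v"
  shows "reach T u w"
proof -
  have "\<forall>w\<in>descendants v - {v}. \<exists>e\<in>CR. head e = w \<and> tail e \<in> descendants v"
    using assms(2) bij_betw_preimage[of head CR] unfolding out_tree_def by blast
  then have "reach T v w" using out_tree_reaches_leaves[of CR T, OF _ assms(4) _ assms(6)] assms(3) by simp
  moreover have "reach T u v" using in_tree_reaches_root[OF assms(1) _ assms(4,5)] assms(3) by simp
  ultimately show ?thesis by (rule rtrancl_trans[rotated])
qed

text \<open>If the only edges of T entering ancestors of v are those of an in-tree, then no two paths
  merge at an ancestor of v: the in-tree has no forks.\<close>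
lemma no_merge_into_ancestors:
  assumes tree: "in_tree C v" and TE: "C \<subseteq> T" "T \<subseteq> E"
    and only: "\<forall>e\<in>T - C. head e \<notin> ancestors v"
    and e: "e \<in> T" "e' \<in> T" "head e = head e'" "head e \<in> ancestors v"
    and x: "reach T x (tail e)" "reach T x (tail e')"
  shows "e = e'"
proof (rule no_merge_in_fork_free_region[OF TE(2) _ _ e x])
  show "\<forall>e\<in>T. head e \<in> ancestors v \<longrightarrow> tail e \<in> ancestors v"
    using ancestors_of_in_edge TE by blast
  have "inj_on tail C" "\<forall>e\<in>C. head e \<in> ancestors v" using tree unfolding in_tree_def bij_betw_def by auto
  then show "\<forall>f\<in>T. \<forall>f'\<in>T. f \<noteq> f' \<and> tail f = tail f' \<and> head f \<in> ancestors v \<and> head f' \<in> ancestors v \<longrightarrow>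
          \<not> (\<exists>z\<in>ancestors v. reach T (head f) z \<and> reach T (head f') z)"
    using only unfolding inj_on_def by blast
qed

lemma hub_subgraph:
  "\<exists>T\<subseteq>E. merge_free T \<and> (\<forall>u\<in>ancestors v. \<forall>w\<in>descendants v. reach T u w)"
proof -
  obtain CU CR where CU: "in_tree CU v" and CR: "out_tree CR v"
    using in_tree_exists out_tree_exists by blast
  define T where "T = CU \<union> CR"
  have TE: "CU \<subseteq> T" "T \<subseteq> E" using CU CR unfolding T_def in_tree_def out_tree_def by auto
  have only: "\<forall>e\<in>T - CU. head e \<notin> ancestors v"
    using CR ancestors_inter_descendants[of v] unfolding T_def out_tree_def bij_betw_def by auto
  have "merge_free T"
    unfolding merge_free_def
  proof (intro ballI allI impI)
    fix e e' x assume e: "e \<in> T" "e' \<in> T"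
      and ex: "head e = head e' \<and> reach T x (tail e) \<and> reach T x (tail e')"
    then have x: "head e = head e'" "reach T x (tail e)" "reach T x (tail e')" by simp_all
    show "e = e'"
    proof (cases "head e \<in> ancestors v")
      case True
      then show ?thesis using no_merge_into_ancestors[OF CU TE only e(1,2)] x by simp
    next
      case False
      then have "e \<in> CR" "e' \<in> CR" using e x CU unfolding T_def in_tree_def by auto
      then show ?thesis using CR x(1) unfolding out_tree_def bij_betw_def inj_on_def by simp
    qed
  qed
  moreover have "\<forall>u\<in>ancestors v. \<forall>w\<in>descendants v. reach T u w"
    using hub_reach[OF CU CR _ TE(2)] unfolding T_def by simp
  ultimately show ?thesis using TE(2) by (intro exI[of _ T]) simp
qed

definition fed_by_common :: "'v \<Rightarrow> 'v \<Rightarrow> 'v set" where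
  "fed_by_common v a = {w. \<exists>e\<in>E. head e = w \<and> tail e \<in> descendants v \<inter> descendants a}"

end

locale two_hub_choice = dag E tail head for E :: "'e set" and tail head :: "'e \<Rightarrow> 'v" +
  fixes v a :: 'v and CU CR CD :: "'e set"
  assumes a_not_above_v: "\<not> reach E a v"
    and CU: "in_tree CU v"
    and CR: "out_tree CR v" "\<forall>e\<in>CR. head e \<in> fed_by_common v a \<longrightarrow> tail e \<in> descendants a"
    and CD: "CD \<subseteq> E" "bij_betw head CD (descendants a - {a} - fed_by_common v a)"
      "\<forall>e\<in>CD. tail e \<in> descendants a - descendants v"
begin

definition subgraph :: "'e set" where
  "subgraph = CU \<union> CR \<union> CD"

lemma CR_props: "CR \<subseteq> E" "bij_betw head CR (descendants v - {v})" "\<forall>e\<in>CR. tail e \<in> descendants v"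
  using CR(1) unfolding out_tree_def by simp_all

lemma CU_props: "CU \<subseteq> subgraph" "\<forall>e\<in>CU. head e \<in> ancestors v"
  using CU unfolding subgraph_def in_tree_def by auto

lemma subgraph_edges: "subgraph \<subseteq> E"
  unfolding subgraph_def using CU CR_props CD unfolding in_tree_def by blast

lemma ancestors_disjoint: "ancestors v \<inter> descendants a = {}"
  unfolding ancestors_def descendants_def using a_not_above_v rtrancl_trans by fastforce

text \<open>A vertex entered both by a CD-edge and by a CR-edge is not fed from the common part, so the
  CR-edge comes from outside the descendants of a, while the CD-edge comes from descendants of a
  that are not descendants of v; both regions are ancestor-closed in the subgraph.\<close>
lemma no_merge_between_CD_CR:
  assumes "f \<in> CD" "f' \<in> CR" "head f = head f'"
  shows "\<not> (reach subgraph x (tail f) \<and> reach subgraph x (tail f'))"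
proof (rule no_merge_from_separated_regions)
  show "\<forall>e\<in>subgraph. head e \<in> descendants a - descendants v \<longrightarrow> tail e \<in> descendants a - descendants v"
    using CU_props CR_props(2) CD(3) ancestors_disjoint unfolding subgraph_def bij_betw_def by auto
  show "\<forall>e\<in>subgraph. head e \<in> - descendants a \<longrightarrow> tail e \<in> - descendants a"
    using descendants_of_out_edge subgraph_edges by blast
  have "head f' \<notin> fed_by_common v a" using assms bij_betw_apply[OF CD(2) assms(1)] by auto
  then show "tail f' \<in> - descendants a"
    using assms(2) CR_props(1,3) unfolding fed_by_common_def by blast
qed (use assms CD(3) in auto)

lemma subgraph_merge_free: "merge_free subgraph"
  unfolding merge_free_def
proof (intro ballI allI impI)
  fix e e' x assume e: "e \<in> subgraph" "e' \<in> subgraph"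
    and ex: "head e = head e' \<and> reach subgraph x (tail e) \<and> reach subgraph x (tail e')"
  then have x: "head e = head e'" "reach subgraph x (tail e)" "reach subgraph x (tail e')" by simp_all
  show "e = e'"
  proof (cases "head e \<in> ancestors v")
    case True
    have "\<forall>e\<in>subgraph - CU. head e \<notin> ancestors v"
      using CR_props(2) CD(2) ancestors_inter_descendants[of v] ancestors_disjoint
      unfolding subgraph_def bij_betw_def by auto
    then show ?thesis
      using no_merge_into_ancestors[OF CU CU_props(1) subgraph_edges _ e] True x by simp
  next
    case False
    then have "e \<in> CR \<union> CD" "e' \<in> CR \<union> CD" using e x CU_props(2) unfolding subgraph_def by auto
    then show ?thesis
      using CR_props(2) CD(2) no_merge_between_CD_CR[of e e'] no_merge_between_CD_CR[of e' e] x
      unfolding bij_betw_def inj_on_def by auto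
  qed
qed

lemma subgraph_reach_from_ancestors:
  "u \<in> ancestors v \<Longrightarrow> w \<in> descendants v \<Longrightarrow> reach subgraph u w"
  using hub_reach[OF CU CR(1) _ subgraph_edges] unfolding subgraph_def by simp

text \<open>a reaches all its descendants: common descendants fed from the common part through CR,
  all others through CD.\<close>
lemma subgraph_reach_from_a:
  assumes "w \<in> descendants a"
  shows "reach subgraph a w"
proof (rule out_tree_reaches_leaves[of "CR \<union> CD"])
  show "CR \<union> CD \<subseteq> subgraph" unfolding subgraph_def by auto
  show "\<forall>w\<in>descendants a - {a}. \<exists>e\<in>CR \<union> CD. head e = w \<and> tail e \<in> descendants a"
  proof
    fix w assume w: "w \<in> descendants a - {a}"
    show "\<exists>e\<in>CR \<union> CD. head e = w \<and> tail e \<in> descendants a"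
    proof (cases "w \<in> fed_by_common v a")
      case True
      then have "w \<in> descendants v - {v}"
        using descendants_of_out_edge ancestors_disjoint
        unfolding fed_by_common_def ancestors_def by auto
      then obtain e where "e \<in> CR" "head e = w" using bij_betw_preimage[OF CR_props(2)] by blast
      then show ?thesis using CR(2) True by auto
    next
      case False
      then obtain e where "e \<in> CD" "head e = w" using w bij_betw_preimage[OF CD(2)] by blast
      then show ?thesis using CD(3) by auto
    qed
  qed
qed (use subgraph_edges assms in auto)

end

context dag
begin

lemma two_hub_choice_exists:
  assumes a_v: "\<not> reach E a v"
  obtains CU CR CD where "two_hub_choice E tail head v a CU CR CD"
proof -
  obtain CU where CU: "in_tree CU v" using in_tree_exists by blast
  have "\<exists>e\<in>E. head e = w \<and> tail e \<in> descendants v \<and>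
          (head e \<in> fed_by_common v a \<longrightarrow> tail e \<in> descendants a)"
    if w: "w \<in> descendants v - {v}" for w
  proof (cases "w \<in> fed_by_common v a")
    case True
    then show ?thesis unfolding fed_by_common_def by auto
  next
    case False
    then show ?thesis using last_edge[of v w E] w unfolding descendants_def by auto
  qed
  then obtain CR where CR: "out_tree CR v"
      "\<forall>e\<in>CR. head e \<in> fed_by_common v a \<longrightarrow> tail e \<in> descendants a"
    using choose_edges[of "descendants v - {v}" E head
        "\<lambda>e. tail e \<in> descendants v \<and> (head e \<in> fed_by_common v a \<longrightarrow> tail e \<in> descendants a)"]
    unfolding out_tree_def by blast
  have "\<exists>e\<in>E. head e = w \<and> tail e \<in> descendants a - descendants v"
    if w: "w \<in> descendants a - {a} - fed_by_common v a" for w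
  proof -
    obtain e where e: "e \<in> E" "head e = w" "tail e \<in> descendants a"
      using last_edge[of a w E] w unfolding descendants_def by auto
    then have "tail e \<notin> descendants v" using w unfolding fed_by_common_def by auto
    then show ?thesis using e by blast
  qed
  then obtain CD where CD: "CD \<subseteq> E" "bij_betw head CD (descendants a - {a} - fed_by_common v a)"
      "\<forall>e\<in>CD. tail e \<in> descendants a - descendants v"
    using choose_edges[of "descendants a - {a} - fed_by_common v a" E head
        "\<lambda>e. tail e \<in> descendants a - descendants v"] by blast
  have "two_hub_choice E tail head v a CU CR CD"
    by unfold_locales (use a_v CU CR CD in auto)
  then show thesis by (rule that)
qed

lemma two_hub_subgraph:
  assumes "\<not> reach E a v"
  shows "\<exists>T\<subseteq>E. merge_free T \<and> (\<forall>u\<in>ancestors v. \<forall>w\<in>descendants v. reach T u w)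
           \<and> (\<forall>w\<in>descendants a. reach T a w)"
proof -
  obtain CU CR CD where "two_hub_choice E tail head v a CU CR CD"
    using two_hub_choice_exists[OF assms] .
  then interpret two_hub_choice E tail head v a CU CR CD .
  show ?thesis
    using subgraph_edges subgraph_merge_free subgraph_reach_from_ancestors subgraph_reach_from_a
    by (intro exI[of _ subgraph]) simp
qed

lemma reverse_dag: "dag E head tail"
proof
  have "arcs E head tail = (arcs E tail head)\<inverse>" unfolding arcs_def by auto
  then show "acyclic (arcs E head tail)" using acyclic_E by simp
qed (rule finite_E)

lemma reach_reverse: "(x, y) \<in> (arcs T head tail)\<^sup>* \<longleftrightarrow> reach T y x"
proof -
  have "arcs T head tail = (arcs T tail head)\<inverse>" unfolding arcs_def by auto
  then show ?thesis by (simp add: rtrancl_converse)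
qed

text \<open>Merge-freeness of the reversed subgraph says that branches of a split never meet again;
  by the fork lemma (with the whole vertex set as region) this gives merge-freeness.\<close>
lemma merge_free_of_reverse:
  assumes TE: "T \<subseteq> E" and rev: "dag.merge_free head tail T"
  shows "merge_free T"
proof -
  interpret rev: dag E head tail by (rule reverse_dag)
  have "\<forall>f\<in>T. \<forall>f'\<in>T. f \<noteq> f' \<and> tail f = tail f' \<and> head f \<in> UNIV \<and> head f' \<in> UNIV \<longrightarrow>
          \<not> (\<exists>z\<in>UNIV. reach T (head f) z \<and> reach T (head f') z)"
    using rev unfolding rev.merge_free_def reach_reverse by auto
  then show ?thesis
    unfolding merge_free_def using no_merge_in_fork_free_region[OF TE, of UNIV] by auto
qed

text \<open>Type (3,2), the mirror image of (2,3): if v does not reach b, some merge-free subgraph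
  connects all ancestors of v to all descendants of v and all ancestors of b to b.\<close>
lemma dual_two_hub_subgraph:
  assumes "\<not> reach E v b"
  shows "\<exists>T\<subseteq>E. merge_free T \<and> (\<forall>u\<in>ancestors v. \<forall>w\<in>descendants v. reach T u w)
           \<and> (\<forall>u\<in>ancestors b. reach T u b)"
proof -
  interpret rev: dag E head tail by (rule reverse_dag)
  have anc: "rev.ancestors x = descendants x" and desc: "rev.descendants x = ancestors x" for x
    unfolding rev.ancestors_def rev.descendants_def ancestors_def descendants_def reach_reverse
    by simp_all
  have rv: "\<not> rev.reach E b v" using assms unfolding reach_reverse .
  obtain T where "T \<subseteq> E \<and> rev.merge_free T
      \<and> (\<forall>u\<in>rev.ancestors v. \<forall>w\<in>rev.descendants v. rev.reach T u w)
      \<and> (\<forall>w\<in>rev.descendants b. rev.reach T b w)"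
    using rev.two_hub_subgraph[OF rv] by (elim exE) (rule that)
  then have T: "T \<subseteq> E" "rev.merge_free T"
      "\<forall>u\<in>rev.ancestors v. \<forall>w\<in>rev.descendants v. rev.reach T u w"
      "\<forall>w\<in>rev.descendants b. rev.reach T b w"
    by simp_all
  have "merge_free T" using merge_free_of_reverse[OF T(1,2)] .
  moreover have "\<forall>u\<in>ancestors v. \<forall>w\<in>descendants v. reach T u w"
    using T(3) unfolding anc desc reach_reverse by simp
  moreover have "\<forall>u\<in>ancestors b. reach T u b"
    using T(4) unfolding desc reach_reverse .
  ultimately show ?thesis using T(1) by (intro exI[of _ T]) simp
qed

lemma connecting_subgraph_hub:
  fixes n m :: nat
  assumes "\<forall>i<n. s i \<in> ancestors v" "\<forall>j<m. t j \<in> descendants v"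
  shows "\<exists>T\<subseteq>E. merge_free T \<and> (\<forall>i<n. \<forall>j<m. reach T (s i) (t j))"
proof -
  obtain T where "T \<subseteq> E \<and> merge_free T \<and> (\<forall>u\<in>ancestors v. \<forall>w\<in>descendants v. reach T u w)"
    using hub_subgraph[of v] by (elim exE) (rule that)
  then show ?thesis using assms by (intro exI[of _ T]) simp
qed

lemma connecting_subgraph_source_off:
  fixes n m :: nat
  assumes k: "\<not> reach E (s k) v" "\<forall>j<m. reach E (s k) (t j)"
    and up: "\<forall>i<n. i \<noteq> k \<longrightarrow> s i \<in> ancestors v" and down: "\<forall>j<m. t j \<in> descendants v"
  shows "\<exists>T\<subseteq>E. merge_free T \<and> (\<forall>i<n. \<forall>j<m. reach T (s i) (t j))"
proof -
  obtain T where T: "T \<subseteq> E" "merge_free T" "\<forall>u\<in>ancestors v. \<forall>w\<in>descendants v. reach T u w"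
      "\<forall>w\<in>descendants (s k). reach T (s k) w"
    using two_hub_subgraph[OF k(1)] by (elim exE conjE) (rule that)
  have "reach T (s i) (t j)" if i: "i < n" and j: "j < m" for i j
  proof (cases "i = k")
    case True
    have "t j \<in> descendants (s k)" using k(2) j unfolding descendants_def by simp
    then show ?thesis unfolding True by (rule bspec[OF T(4)])
  next
    case False
    then have "s i \<in> ancestors v" "t j \<in> descendants v" using up down i j by simp_all
    then show ?thesis by (rule T(3)[rule_format])
  qed
  then show ?thesis using T(1,2) by (intro exI[of _ T]) simp
qed

lemma connecting_subgraph_terminal_off:
  fixes n m :: nat
  assumes k: "\<not> reach E v (t k)" "\<forall>i<n. reach E (s i) (t k)"
    and up: "\<forall>i<n. s i \<in> ancestors v" and down: "\<forall>j<m. j \<noteq> k \<longrightarrow> t j \<in> descendants v"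
  shows "\<exists>T\<subseteq>E. merge_free T \<and> (\<forall>i<n. \<forall>j<m. reach T (s i) (t j))"
proof -
  obtain T where T: "T \<subseteq> E" "merge_free T" "\<forall>u\<in>ancestors v. \<forall>w\<in>descendants v. reach T u w"
      "\<forall>u\<in>ancestors (t k). reach T u (t k)"
    using dual_two_hub_subgraph[OF k(1)] by (elim exE conjE) (rule that)
  have "reach T (s i) (t j)" if i: "i < n" and j: "j < m" for i j
  proof (cases "j = k")
    case True
    have "s i \<in> ancestors (t k)" using k(2) i unfolding ancestors_def by simp
    then show ?thesis unfolding True by (rule bspec[OF T(4)])
  next
    case False
    then have "s i \<in> ancestors v" "t j \<in> descendants v" using up down i j by simp_all
    then show ?thesis by (rule T(3)[rule_format])
  qed
  then show ?thesis using T(1,2) by (intro exI[of _ T]) simp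
qed

lemma no_source_is_terminal:
  fixes n :: nat
  assumes no_in: "\<forall>i<n. \<forall>e\<in>E. head e \<noteq> s i" and inj: "inj_on s {..<n}" and two: "2 \<le> n"
    and conn: "\<forall>i<n. reach E (s i) w"
  shows "\<forall>i<n. w \<noteq> s i"
proof (intro allI impI notI)
  fix i assume i: "i < n" and w: "w = s i"
  define i' where "i' = (if i = 0 then 1 else 0 :: nat)"
  have i': "i' < n" "i' \<noteq> i" unfolding i'_def using two by auto
  have path: "reach E (s i') (s i)" using conn[rule_format, OF i'(1)] unfolding w .
  have "s i' = s i"
  proof (rule ccontr)
    assume "s i' \<noteq> s i"
    then obtain e where "e \<in> E" "head e = s i" using last_edge[OF path] by blast
    then show False using no_in i by simp
  qed
  then show False using inj i i' unfolding inj_on_def by simp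
qed

end

lemma all_of_full_count: "card {i::nat. i < n \<and> P i} = n \<Longrightarrow> \<forall>i<n. P i"
proof -
  assume "card {i::nat. i < n \<and> P i} = n"
  then have "{i. i < n \<and> P i} = {..<n}"
    using card_subset_eq[of "{..<n}" "{i. i < n \<and> P i}"] by auto
  then show ?thesis by auto
qed

lemma all_but_one_of_count:
  assumes "Suc (card {i::nat. i < n \<and> P i}) = n"
  shows "\<exists>k<n. \<not> P k \<and> (\<forall>i<n. i \<noteq> k \<longrightarrow> P i)"
proof -
  let ?S = "{i::nat. i < n \<and> P i}"
  have "?S \<subseteq> {..<n}" by auto
  then have "card ({..<n} - ?S) = 1" using assms card_Diff_subset[of ?S "{..<n}"] by simp
  then obtain k where k: "{..<n} - ?S = {k}" using card_1_singletonE by blast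
  then show ?thesis by blast
qed

context dag
begin

lemma vertex_type_cases:
  fixes s t :: "nat \<Rightarrow> 'v"
  assumes "(c_s E tail head 3 s v, c_t E tail head 3 t v) \<in> {(3,3), (2,3), (3,2)}"
  obtains (hub) "\<forall>i<3. s i \<in> ancestors v" "\<forall>j<3. t j \<in> descendants v"
    | (source_off) k where "k < 3" "s k \<notin> ancestors v" "\<forall>i<3. i \<noteq> k \<longrightarrow> s i \<in> ancestors v"
        "\<forall>j<3. t j \<in> descendants v"
    | (terminal_off) k where "k < 3" "t k \<notin> descendants v"
        "\<forall>j<3. j \<noteq> k \<longrightarrow> t j \<in> descendants v" "\<forall>i<3. s i \<in> ancestors v"
proof -
  let ?cs = "card {i. i < 3 \<and> s i \<in> ancestors v}" and ?ct = "card {j. j < 3 \<and> t j \<in> descendants v}"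
  have "c_s E tail head 3 s v = ?cs" "c_t E tail head 3 t v = ?ct"
    unfolding c_s_def c_t_def has_path_def ancestors_def descendants_def by simp_all
  then have "(?cs = 3 \<and> ?ct = 3) \<or> (Suc ?cs = 3 \<and> ?ct = 3) \<or> (?cs = 3 \<and> Suc ?ct = 3)"
    using assms by auto
  then show thesis
  proof (elim disjE conjE)
    assume "?cs = 3" "?ct = 3"
    have "\<forall>i<3. s i \<in> ancestors v" by (rule all_of_full_count) fact
    moreover have "\<forall>j<3. t j \<in> descendants v" by (rule all_of_full_count) fact
    ultimately show thesis by (rule hub)
  next
    assume "Suc ?cs = 3" "?ct = 3"
    then obtain k where "k < 3" "s k \<notin> ancestors v" "\<forall>i<3. i \<noteq> k \<longrightarrow> s i \<in> ancestors v"
      using all_but_one_of_count[of 3 "\<lambda>i. s i \<in> ancestors v"] by blast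
    moreover have "\<forall>j<3. t j \<in> descendants v" by (rule all_of_full_count) fact
    ultimately show thesis by (rule source_off)
  next
    assume "?cs = 3" "Suc ?ct = 3"
    then obtain k where "k < 3" "t k \<notin> descendants v" "\<forall>j<3. j \<noteq> k \<longrightarrow> t j \<in> descendants v"
      using all_but_one_of_count[of 3 "\<lambda>j. t j \<in> descendants v"] by blast
    moreover have "\<forall>i<3. s i \<in> ancestors v" by (rule all_of_full_count) fact
    ultimately show thesis by (rule terminal_off)
  qed
qed

end

theorem mainTheorem8:
  fixes V :: "'v set" and E :: "'e set" and tail head :: "'e \<Rightarrow> 'v"
    and s t :: "nat \<Rightarrow> 'v" and v :: 'v
  assumes net: "network V E tail head"
    and src: "\<forall>i<3. s i \<in> V" "inj_on s {..<3}" "\<forall>i<3. \<forall>e\<in>E. head e \<noteq> s i"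
    and trm: "\<forall>j<3. t j \<in> V" "inj_on t {..<3}" "\<forall>j<3. \<forall>e\<in>E. tail e \<noteq> t j"
    and conn: "\<forall>i<3. \<forall>j<3. has_path E tail head (s i) (t j)"
    and vV: "v \<in> V"
    and vtype: "(c_s E tail head 3 s v, c_t E tail head 3 t v) \<in> {(3,3), (2,3), (3,2)}"
  shows "\<exists>(alpha :: 'e \<Rightarrow> 'a::{field,finite}) beta msg.
           is_linear_code E tail head 3 s alpha beta msg \<and>
           (\<forall>j<3. recovers_sum E head 3 msg (t j))"
proof -
  have "dag E tail head" using net unfolding network_def dag_def by simp
  then interpret dag E tail head .
  have reach_st: "\<forall>i<3. \<forall>j<3. reach E (s i) (t j)" using conn unfolding has_path_def .
  from vtype have "\<exists>T\<subseteq>E. merge_free T \<and> (\<forall>i<3. \<forall>j<3. reach T (s i) (t j))"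
  proof (cases rule: vertex_type_cases)
    case hub
    then show ?thesis by (rule connecting_subgraph_hub)
  next
    case (source_off k)
    have "\<not> reach E (s k) v" using source_off(2) unfolding ancestors_def by simp
    moreover have "\<forall>j<3. reach E (s k) (t j)" using reach_st source_off(1) by simp
    ultimately show ?thesis using source_off(3,4) by (rule connecting_subgraph_source_off)
  next
    case (terminal_off k)
    have "\<not> reach E v (t k)" using terminal_off(2) unfolding descendants_def by simp
    moreover have "\<forall>i<3. reach E (s i) (t k)" using reach_st terminal_off(1) by simp
    ultimately show ?thesis using terminal_off(4,3) by (rule connecting_subgraph_terminal_off)
  qed
  then obtain T where T: "T \<subseteq> E" "merge_free T" "\<forall>i<3. \<forall>j<3. reach T (s i) (t j)"
    by auto
  have "\<forall>j<3. \<forall>i<3. t j \<noteq> s i"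
    using no_source_is_terminal[OF src(3,2)] reach_st by simp
  then show ?thesis by (rule all_ones_code[OF T(1,2) src(3,2) _ T(3)])
qed

end
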